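(* Assume that $M\in\omega$ and $\mu:\mathcal P(2^{\omega})\to\omega\cup\{\infty\}$ is a monotone, subadditive function such that (i) $\mu(U)=\infty$ for each non-empty clopen $U\subseteq 2^{\omega}$; (ii) for each $a,b\subseteq 2^{\omega}$, if $\mu(a)\le M<\mu(b)$, then $\sup\{\mu(b\setminus U)+M: a\subseteq U,\ U \text{ clopen in } 2^{\omega}\}\ge \mu(b)$. Then $\mathbb H(\mu)$ is dense, shrinkable and $\mathbb G(\mu,M)$-large.
   Context: For $n\in\omega$ let $C_n=\{n\}\times 2^{\omega}$ and $C=\bigcup_{n<\omega}C_n$ (with the Euclidean topology). For $\mu:\mathcal P(2^\omega)\to\omega\cup\{\infty\}$ and $n\in\omega$ define $\mu^{(n)}:\mathcal P(C_n)\to\omega\cup\{\infty\}$ by $\mu^{(n)}(A)=\mu(\{x:\langle n,x\rangle\in A\})$. Let $\mathbb E$ be the set of functions $e$ with $\mathrm{dom}(e)$ an infinite subset of $\omega$ and $\emptyset\ne e(n)\subseteq C_n$ for each $n\in\mathrm{dom}(e)$; let $\mathbb O=\{o\in\mathbb E: o(n)$ is clopen in $C_n$ for each $n\in\mathrm{dom}(o)\}$. For $f,g\in\mathbb E$: $f\sqsubset g$ iff $\mathrm{dom}(f)\subseteq\mathrm{dom}(g)$ and $f(n)\subseteq g(n)$ for all $n\in\mathrm{dom}(f)$; $f\sqsubset^* g$ iff $\mathrm{dom}(f)\setminus\mathrm{dom}(g)$ is finite and $\{n\in\mathrm{dom}(f): f(n)\not\subseteq g(n)\}$ is finite; $f\perp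 g$ iff $\{n\in\mathrm{dom}(f)\cap\mathrm{dom}(g): f(n)\cap g(n)\ne\emptyset\}$ is finite. For $h\in\mathbb E$, $o\in\mathbb O$, the function $h\dotminus o$ has domain $\{n\in\mathrm{dom}(h): h(n)\not\subseteq o(n)\}$ (where $n\notin\mathrm{dom}(o)$ counts as $h(n)\not\subseteq o(n)$), with $(h\dotminus o)(n)=h(n)\setminus o(n)$ if $n\in\mathrm{dom}(o)$ and $=h(n)$ otherwise. $\mathbb G(\mu,M)=\{g\in\mathbb E:\mu^{(n)}(g(n))\le M$ for each $n\in\mathrm{dom}(g)\}$ and $\mathbb H(\mu)=\{h\in\mathbb E:\lim_{n\in\mathrm{dom}(h)}\mu^{(n)}(h(n))=\infty\}$. For $\mathbb G,\mathbb H\subseteq\mathbb E$: $\mathbb H$ is dense iff for each $o\in\mathbb O$ there is $h\in\mathbb H$ with $h\sqsubset o$; $\mathbb H$ is shrinkable iff for each $h\in\mathbb H$ and each countably infinite $\mathcal O\subseteq\mathbb O$ there is $h'\in\mathbb H$ with $h'\sqsubset h$ and, for all $o\in\mathcal O$, $h'\sqsubset^* o$ or $h'\perp o$; $\mathbb H$ is $\mathbb G$-large iff for each $g\in\mathbb G$ and each countably infinite $\mathcal H\subseteq\mathbb H$ there is $o\in\mathbb O$ with $g\sqsubset o$ and $h\dotminus o\in\mathbb H$ for every $h\in\mathcal H$. *)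

theory Defs
  imports "HOL-Analysis.Analysis" "HOL-Library.Extended_Nat"
begin

type_synonym cantor = "nat \<Rightarrow> bool"
type_synonym cpt = "nat \<times> cantor"
type_synonym efun = "nat \<Rightarrow> cpt set option"

definition cantor_top :: "cantor topology" where
  "cantor_top = product_topology (\<lambda>_. discrete_topology UNIV) UNIV"

definition C_top :: "cpt topology" where
  "C_top = prod_topology (discrete_topology UNIV) cantor_top"

definition Cn :: "nat \<Rightarrow> cpt set" where
  "Cn n = {n} \<times> UNIV"

definition clopen_in :: "'a topology \<Rightarrow> 'a set \<Rightarrow> bool" where
  "clopen_in T U \<longleftrightarrow> openin T U \<and> closedin T U"

definition mu_n :: "(cantor set \<Rightarrow> enat) \<Rightarrow> nat \<Rightarrow> cpt set \<Rightarrow> enat" where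
  "mu_n \<mu> n A = \<mu> {x. (n, x) \<in> A}"

definition Eset :: "efun set" where
  "Eset = {e. infinite (dom e) \<and> (\<forall>n\<in>dom e. the (e n) \<noteq> {} \<and> the (e n) \<subseteq> Cn n)}"

definition Oset :: "efun set" where
  "Oset = {u \<in> Eset. \<forall>n\<in>dom u. clopen_in (subtopology C_top (Cn n)) (the (u n))}"

definition sqsub :: "efun \<Rightarrow> efun \<Rightarrow> bool" where
  "sqsub f g \<longleftrightarrow> dom f \<subseteq> dom g \<and> (\<forall>n\<in>dom f. the (f n) \<subseteq> the (g n))"

definition sqsub_star :: "efun \<Rightarrow> efun \<Rightarrow> bool" where
  "sqsub_star f g \<longleftrightarrow> finite (dom f - dom g) \<and>
     finite {n \<in> dom f \<inter> dom g. \<not> the (f n) \<subseteq> the (g n)}"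

definition perp :: "efun \<Rightarrow> efun \<Rightarrow> bool" where
  "perp f g \<longleftrightarrow> finite {n \<in> dom f \<inter> dom g. the (f n) \<inter> the (g n) \<noteq> {}}"

definition dotminus :: "efun \<Rightarrow> efun \<Rightarrow> efun" where
  "dotminus h u = (\<lambda>n. if n \<in> dom h \<and> (n \<notin> dom u \<or> \<not> the (h n) \<subseteq> the (u n))
      then Some (if n \<in> dom u then the (h n) - the (u n) else the (h n)) else None)"

definition Gset :: "(cantor set \<Rightarrow> enat) \<Rightarrow> nat \<Rightarrow> efun set" where
  "Gset \<mu> M = {g \<in> Eset. \<forall>n\<in>dom g. mu_n \<mu> n (the (g n)) \<le> enat M}"

text \<open>lim over n in dom h of mu^(n)(h(n)) = infinity: for every finite bound K,
  only finitely many n in dom h have value at most K.\<close>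
definition Hset :: "(cantor set \<Rightarrow> enat) \<Rightarrow> efun set" where
  "Hset \<mu> = {h \<in> Eset. \<forall>K::nat. finite {n \<in> dom h. mu_n \<mu> n (the (h n)) \<le> enat K}}"

definition dense_fam :: "efun set \<Rightarrow> bool" where
  "dense_fam H \<longleftrightarrow> (\<forall>u\<in>Oset. \<exists>h\<in>H. sqsub h u)"

definition shrinkable :: "efun set \<Rightarrow> bool" where
  "shrinkable H \<longleftrightarrow> (\<forall>h\<in>H. \<forall>\<O>. \<O> \<subseteq> Oset \<and> countable \<O> \<and> infinite \<O> \<longrightarrow>
     (\<exists>h'\<in>H. sqsub h' h \<and> (\<forall>u\<in>\<O>. sqsub_star h' u \<or> perp h' u)))"

definition large :: "efun set \<Rightarrow> efun set \<Rightarrow> bool" where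
  "large G H \<longleftrightarrow> (\<forall>g\<in>G. \<forall>\<H>. \<H> \<subseteq> H \<and> countable \<H> \<and> infinite \<H> \<longrightarrow>
     (\<exists>u\<in>Oset. sqsub g u \<and> (\<forall>h\<in>\<H>. dotminus h u \<in> H)))"

end

theory Submission
  imports Defs
begin

text \<open>
  Density: by (i) every clopen selector already lies in \<open>\<bbbH>(\<mu>)\<close>.

  Shrinkability is a fusion argument. Enumerate the countably many \<open>o\<^sub>i\<close> and refine \<open>h\<close>
  step by step: at step \<open>i\<close> keep, on infinitely many coordinates, either the part inside
  \<open>o\<^sub>i\<close> or the part outside it, whichever carries at least half of the size; by
  subadditivity one of them does. After \<open>i\<close> steps sizes have dropped by at most the factor
  \<open>2\<^sup>i\<close>, so diagonalising along coordinates where \<open>h\<close> is large enough yields an element of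
  \<open>\<bbbH>(\<mu>)\<close> that is almost below every refinement, hence almost inside or almost disjoint
  from every \<open>o\<^sub>i\<close>.

  Largeness: enumerate \<open>\<H> = {h\<^sub>j}\<close>. On coordinate \<open>n\<close>, (ii) gives for each \<open>j \<le> n\<close> a
  clopen set around \<open>g(n)\<close> whose removal lowers the size of \<open>h\<^sub>j(n)\<close>, truncated at \<open>n\<close>, by at
  most \<open>M\<close>; their intersection works for all \<open>j \<le> n\<close> at once, and since every \<open>h\<^sub>j\<close> is
  handled on all but finitely many coordinates, the sizes of \<open>dotminus h\<^sub>j o\<close> still tend to infinity.
\<close>

section \<open>Slices and clopen sets\<close>

definition slice :: "nat \<Rightarrow> cpt set \<Rightarrow> cantor set" where
  "slice n A = {x. (n, x) \<in> A}"

lemma mu_n_slice: "mu_n \<mu> n A = \<mu> (slice n A)"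
  by (simp add: mu_n_def slice_def)

lemma slice_empty [simp]: "slice n {} = {}"
  and slice_Un [simp]: "slice n (A \<union> B) = slice n A \<union> slice n B"
  and slice_Diff [simp]: "slice n (A - B) = slice n A - slice n B"
  and slice_Times [simp]: "slice n ({n} \<times> W) = W"
  by (auto simp: slice_def)

lemma slice_eq_empty_iff: "A \<subseteq> Cn n \<Longrightarrow> slice n A = {} \<longleftrightarrow> A = {}"
  by (auto simp: slice_def Cn_def)

lemma subset_Cn_iff_slice: "A \<subseteq> Cn n \<Longrightarrow> A \<subseteq> B \<longleftrightarrow> slice n A \<subseteq> slice n B"
  by (auto simp: slice_def Cn_def)

lemma topspace_cantor_top [simp]: "topspace cantor_top = UNIV"
  by (simp add: cantor_top_def)

lemma clopen_in_cantor_UNIV: "clopen_in cantor_top UNIV"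
  by (metis clopen_in_def closedin_topspace openin_topspace topspace_cantor_top)

lemma clopen_in_cantor_INT:
  assumes "finite J" and "\<And>j. j \<in> J \<Longrightarrow> clopen_in cantor_top (V j)"
  shows "clopen_in cantor_top (\<Inter>j\<in>J. V j)"
proof (cases "J = {}")
  case True
  then show ?thesis
    using clopen_in_cantor_UNIV by simp
next
  case False
  then show ?thesis
    using assms by (simp add: clopen_in_def openin_INT2 closedin_INT)
qed

lemma clopen_in_Cn_Times:
  assumes "clopen_in cantor_top U"
  shows "clopen_in (subtopology C_top (Cn n)) ({n} \<times> U)"
proof -
  have "openin C_top ({n} \<times> U)" and "closedin C_top ({n} \<times> U)"
    using assms by (auto simp: C_top_def clopen_in_def openin_prod_Times_iff closedin_prod_Times_iff)
  moreover have "{n} \<times> U = ({n} \<times> U) \<inter> Cn n"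
    by (auto simp: Cn_def)
  ultimately show ?thesis
    unfolding clopen_in_def openin_subtopology closedin_subtopology by blast
qed

lemma clopen_in_slice:
  assumes "clopen_in (subtopology C_top (Cn n)) S"
  shows "clopen_in cantor_top (slice n S)"
proof -
  have emb: "continuous_map cantor_top C_top (\<lambda>x. (n, x))"
    unfolding C_top_def
    by (intro continuous_map_pairedI continuous_map_id continuous_map_const[THEN iffD2]) auto
  obtain T1 T2 where "openin C_top T1" "closedin C_top T2" "S = T1 \<inter> Cn n" "S = T2 \<inter> Cn n"
    using assms by (auto simp: clopen_in_def openin_subtopology closedin_subtopology)
  moreover have "slice n (T \<inter> Cn n) = {x \<in> topspace cantor_top. (n, x) \<in> T}" for T
    by (auto simp: slice_def Cn_def)
  ultimately show ?thesis
    unfolding clopen_in_def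
    using openin_continuous_map_preimage[OF emb] closedin_continuous_map_preimage[OF emb] by metis
qed

lemma EsetD:
  assumes "e \<in> Eset"
  shows "infinite (dom e)" and "n \<in> dom e \<Longrightarrow> the (e n) \<noteq> {}" and "n \<in> dom e \<Longrightarrow> the (e n) \<subseteq> Cn n"
  using assms by (auto simp: Eset_def)

section \<open>The orders on selectors\<close>

lemma sqsub_refl [simp]: "sqsub f f"
  by (simp add: sqsub_def)

lemma sqsub_trans: "sqsub f g \<Longrightarrow> sqsub g h \<Longrightarrow> sqsub f h"
  unfolding sqsub_def by blast

lemma sqsub_imp_sqsub_star: "sqsub f g \<Longrightarrow> sqsub_star f g"
  unfolding sqsub_def sqsub_star_def
  by (metis (no_types, lifting) Diff_eq_empty_iff IntD1 empty_Collect_eq finite.emptyI)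

lemma sqsub_star_trans:
  assumes "sqsub_star f g" and "sqsub_star g h"
  shows "sqsub_star f h"
proof -
  let ?bad = "\<lambda>f g. {n \<in> dom f \<inter> dom g. \<not> the (f n) \<subseteq> the (g n)}"
  have "dom f - dom h \<subseteq> (dom f - dom g) \<union> ?bad f g \<union> (dom g - dom h)"
    and "?bad f h \<subseteq> (dom f - dom g) \<union> ?bad f g \<union> ?bad g h"
    by auto
  with assms show ?thesis
    unfolding sqsub_star_def by (meson finite_UnI finite_subset)
qed

lemma sqsub_star_perp:
  assumes "sqsub_star f g" and "perp g h"
  shows "perp f h"
proof -
  have "{n \<in> dom f \<inter> dom h. the (f n) \<inter> the (h n) \<noteq> {}} \<subseteq> (dom f - dom g) \<union>
      {n \<in> dom f \<inter> dom g. \<not> the (f n) \<subseteq> the (g n)} \<union> {n \<in> dom g \<inter> dom h. the (g n) \<inter> the (h n) \<noteq> {}}"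
    by auto
  with assms show ?thesis
    unfolding sqsub_star_def perp_def by (meson finite_UnI finite_subset)
qed

section \<open>Density\<close>

lemma Oset_subset_Hset:
  assumes "\<And>U. U \<noteq> {} \<Longrightarrow> clopen_in cantor_top U \<Longrightarrow> \<mu> U = \<infinity>"
  shows "Oset \<subseteq> Hset \<mu>"
proof
  fix u assume u: "u \<in> Oset"
  then have "u \<in> Eset" by (simp add: Oset_def)
  have "mu_n \<mu> n (the (u n)) = \<infinity>" if "n \<in> dom u" for n
  proof -
    have "clopen_in cantor_top (slice n (the (u n)))"
      using u that by (intro clopen_in_slice) (simp add: Oset_def)
    moreover have "slice n (the (u n)) \<noteq> {}"
      using EsetD[OF \<open>u \<in> Eset\<close>] that by (simp add: slice_eq_empty_iff)
    ultimately show ?thesis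
      using assms by (simp add: mu_n_slice)
  qed
  with \<open>u \<in> Eset\<close> show "u \<in> Hset \<mu>"
    by (simp add: Hset_def cong: conj_cong)
qed

lemma dense_fam_Hset:
  assumes "\<And>U. U \<noteq> {} \<Longrightarrow> clopen_in cantor_top U \<Longrightarrow> \<mu> U = \<infinity>"
  shows "dense_fam (Hset \<mu>)"
  using Oset_subset_Hset[of \<mu>] assms sqsub_refl unfolding dense_fam_def by blast

section \<open>Shrinkability\<close>

lemma mu_n_Un:
  assumes "\<And>A B. \<mu> (A \<union> B) \<le> \<mu> A + \<mu> B"
  shows "mu_n \<mu> n (A \<union> B) \<le> mu_n \<mu> n A + mu_n \<mu> n B"
  unfolding mu_n_slice slice_Un by (rule assms)

lemma halving_split:
  assumes subadd: "\<And>A B. \<mu> (A \<union> B) \<le> \<mu> A + \<mu> B" and "F \<noteq> {}"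
  shows "(F \<inter> Q \<noteq> {} \<and> mu_n \<mu> n F \<le> 2 * mu_n \<mu> n (F \<inter> Q)) \<or>
         (F - Q \<noteq> {} \<and> mu_n \<mu> n F \<le> 2 * mu_n \<mu> n (F - Q))"
proof -
  let ?in = "mu_n \<mu> n (F \<inter> Q)" and ?out = "mu_n \<mu> n (F - Q)"
  have split: "mu_n \<mu> n F \<le> ?in + ?out"
    using mu_n_Un[OF subadd, of n "F \<inter> Q" "F - Q"] by (simp only: Int_Diff_Un)
  consider "F \<inter> Q = {}" | "F - Q = {}" | "F \<inter> Q \<noteq> {}" "F - Q \<noteq> {}"
    by blast
  then show ?thesis
  proof cases
    case 1
    then have "F - Q = F"
      by blast
    then show ?thesis
      using \<open>F \<noteq> {}\<close> by (simp add: mult_2)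
  next
    case 2
    then have "F \<inter> Q = F"
      by blast
    then show ?thesis
      using \<open>F \<noteq> {}\<close> by (simp add: mult_2)
  next
    case 3
    show ?thesis
    proof (cases "?out \<le> ?in")
      case True
      have "mu_n \<mu> n F \<le> ?in + ?in"
        using split add_left_mono[OF True] by (rule order_trans)
      with 3 show ?thesis
        by (simp add: mult_2)
    next
      case False
      then have "?in \<le> ?out"
        by simp
      have "mu_n \<mu> n F \<le> ?out + ?out"
        using split add_right_mono[OF \<open>?in \<le> ?out\<close>] by (rule order_trans)
      with 3 show ?thesis
        by (simp add: mult_2)
    qed
  qed
qed

definition efun_on :: "nat set \<Rightarrow> (nat \<Rightarrow> cpt set) \<Rightarrow> efun" where
  "efun_on D G n = (if n \<in> D then Some (G n) else None)"

lemma dom_efun_on [simp]: "dom (efun_on D G) = D"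
  by (auto simp: efun_on_def dom_def)

lemma the_efun_on [simp]: "n \<in> D \<Longrightarrow> the (efun_on D G n) = G n"
  by (simp add: efun_on_def)

lemma efun_on_shrink:
  assumes e: "e \<in> Eset" and D: "D \<subseteq> dom e" "infinite D"
    and G: "\<And>n. n \<in> D \<Longrightarrow> G n \<noteq> {} \<and> G n \<subseteq> the (e n)"
  shows "efun_on D G \<in> Eset" and "sqsub (efun_on D G) e"
proof -
  have "G n \<subseteq> Cn n" if "n \<in> D" for n
    using G[OF that] EsetD(3)[OF e] D(1) that by blast
  then show "efun_on D G \<in> Eset"
    using D(2) G by (simp add: Eset_def)
  show "sqsub (efun_on D G) e"
    using D(1) G by (simp add: sqsub_def)
qed

text \<open>Keep the part of \<open>e n\<close> inside or the part outside \<open>u n\<close>, whichever carries half of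
  its size; one of the two choices works on infinitely many coordinates.\<close>
lemma halving_refinement:
  assumes subadd: "\<And>A B. \<mu> (A \<union> B) \<le> \<mu> A + \<mu> B" and e: "e \<in> Eset"
  obtains e' where "e' \<in> Eset" and "sqsub e' e" and "sqsub e' u \<or> perp e' u"
    and "\<And>n. n \<in> dom e' \<Longrightarrow> mu_n \<mu> n (the (e n)) \<le> 2 * mu_n \<mu> n (the (e' n))"
proof -
  define Q where "Q n = (if n \<in> dom u then the (u n) else {})" for n
  define In where "In = {n \<in> dom e. the (e n) \<inter> Q n \<noteq> {} \<and>
      mu_n \<mu> n (the (e n)) \<le> 2 * mu_n \<mu> n (the (e n) \<inter> Q n)}"
  define Out where "Out = {n \<in> dom e. the (e n) - Q n \<noteq> {} \<and>
      mu_n \<mu> n (the (e n)) \<le> 2 * mu_n \<mu> n (the (e n) - Q n)}"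
  have "n \<in> In \<union> Out" if "n \<in> dom e" for n
    using halving_split[OF subadd EsetD(2)[OF e that], of "Q n" n] that
    by (simp add: In_def Out_def)
  then have "dom e \<subseteq> In \<union> Out"
    by blast
  then consider "infinite In" | "infinite Out"
    using EsetD(1)[OF e] by (meson finite_UnI finite_subset)
  then show thesis
  proof cases
    case 1
    let ?e' = "efun_on In (\<lambda>n. the (e n) \<inter> Q n)"
    have E: "?e' \<in> Eset" "sqsub ?e' e"
      by (rule efun_on_shrink[OF e _ 1]; auto simp: In_def)+
    have "sqsub ?e' u"
      by (auto simp: sqsub_def In_def Q_def split: if_splits)
    then show thesis
      using that[OF E] by (simp add: In_def)
  next
    case 2
    let ?e' = "efun_on Out (\<lambda>n. the (e n) - Q n)"
    have E: "?e' \<in> Eset" "sqsub ?e' e"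
      by (rule efun_on_shrink[OF e _ 2]; auto simp: Out_def)+
    have "perp ?e' u"
    proof -
      have "{n \<in> dom ?e' \<inter> dom u. the (?e' n) \<inter> the (u n) \<noteq> {}} = {}"
        by (auto simp: Q_def)
      then show ?thesis
        by (simp only: perp_def finite.emptyI)
    qed
    then show thesis
      using that[OF E] by (simp add: Out_def)
  qed
qed

lemma fusion_sequence:
  assumes subadd: "\<And>A B. \<mu> (A \<union> B) \<le> \<mu> A + \<mu> B" and h: "h \<in> Eset"
  obtains es where "\<And>i. es i \<in> Eset" and "\<And>i. sqsub (es i) h"
    and "\<And>i. sqsub (es (Suc i)) (es i)"
    and "\<And>i. sqsub (es (Suc i)) (os i) \<or> perp (es (Suc i)) (os i)"
    and "\<And>i n. n \<in> dom (es i) \<Longrightarrow> mu_n \<mu> n (the (h n)) \<le> 2 ^ i * mu_n \<mu> n (the (es i n))"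
proof -
  define P where "P i e \<longleftrightarrow> e \<in> Eset \<and> sqsub e h \<and>
      (\<forall>n\<in>dom e. mu_n \<mu> n (the (h n)) \<le> 2 ^ i * mu_n \<mu> n (the (e n)))" for i e
  define R where "R i e e' \<longleftrightarrow> sqsub e' e \<and> (sqsub e' (os i) \<or> perp e' (os i))" for i e e'
  have "P 0 h"
    using h by (simp add: P_def)
  moreover have "\<exists>e'. P (Suc i) e' \<and> R i e e'" if "P i e" for i e
  proof -
    obtain e' where e': "e' \<in> Eset" "sqsub e' e" "sqsub e' (os i) \<or> perp e' (os i)"
      and half: "\<And>n. n \<in> dom e' \<Longrightarrow> mu_n \<mu> n (the (e n)) \<le> 2 * mu_n \<mu> n (the (e' n))"
      using halving_refinement[OF subadd, of e "os i"] \<open>P i e\<close> unfolding P_def by blast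
    have "mu_n \<mu> n (the (h n)) \<le> 2 ^ Suc i * mu_n \<mu> n (the (e' n))" if n: "n \<in> dom e'" for n
    proof -
      have "n \<in> dom e"
        using e'(2) n by (auto simp: sqsub_def)
      then have "mu_n \<mu> n (the (h n)) \<le> 2 ^ i * mu_n \<mu> n (the (e n))"
        using \<open>P i e\<close> by (simp add: P_def)
      also have "\<dots> \<le> 2 ^ i * (2 * mu_n \<mu> n (the (e' n)))"
        using half[OF n] by (intro mult_left_mono) simp_all
      finally show ?thesis
        by (simp only: power_Suc2 mult.assoc)
    qed
    moreover have "sqsub e' h"
      using sqsub_trans[OF e'(2)] \<open>P i e\<close> by (simp add: P_def)
    ultimately show ?thesis
      using e' unfolding P_def R_def by blast
  qed
  ultimately obtain es where es: "\<And>i. P i (es i) \<and> R i (es i) (es (Suc i))"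
    using dependent_nat_choice[of P R] by metis
  show thesis
  proof (rule that)
    fix i
    show "es i \<in> Eset" and "sqsub (es i) h"
      and "\<And>n. n \<in> dom (es i) \<Longrightarrow> mu_n \<mu> n (the (h n)) \<le> 2 ^ i * mu_n \<mu> n (the (es i n))"
      using es[of i] by (simp_all add: P_def)
    show "sqsub (es (Suc i)) (es i)" and "sqsub (es (Suc i)) (os i) \<or> perp (es (Suc i)) (os i)"
      using es[of i] by (simp_all add: R_def)
  qed
qed

lemma sqsub_decreasing_chain:
  assumes "\<And>i. sqsub (es (Suc i)) (es i)" and "i \<le> k"
  shows "sqsub (es k) (es i)"
  using \<open>i \<le> k\<close>
proof (induction k rule: dec_induct)
  case (step k)
  then show ?case
    using assms(1) sqsub_trans by blast
qed simp

lemma strict_mono_choice: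
  fixes A :: "nat \<Rightarrow> nat set"
  assumes "\<And>k. infinite (A k)"
  obtains nk where "strict_mono nk" and "\<And>k. nk k \<in> A k"
proof -
  have "\<exists>m. m \<in> A (Suc k) \<and> n < m" for k n
    using assms infinite_nat_iff_unbounded by blast
  moreover have "\<exists>m. m \<in> A 0"
    using assms[of 0] by (metis ex_in_conv finite.emptyI)
  ultimately obtain nk where nk: "\<And>k. nk k \<in> A k \<and> nk k < nk (Suc k)"
    using dependent_nat_choice[of "\<lambda>k m. m \<in> A k" "\<lambda>_ n m. n < m"] by blast
  then have "strict_mono nk"
    by (simp add: strict_mono_Suc_iff)
  with nk show thesis
    using that by blast
qed

definition diagonal :: "(nat \<Rightarrow> efun) \<Rightarrow> (nat \<Rightarrow> nat) \<Rightarrow> efun" where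
  "diagonal es nk n = (if n \<in> range nk then es (inv nk n) n else None)"

context
  fixes es :: "nat \<Rightarrow> efun" and nk :: "nat \<Rightarrow> nat"
  assumes nk: "strict_mono nk" and nk_dom: "\<And>k. nk k \<in> dom (es k)"
begin

lemma dom_diagonal: "dom (diagonal es nk) = range nk"
  using nk_dom by (auto simp: diagonal_def dom_def inv_f_f strict_mono_imp_inj_on[OF nk])

lemma diagonal_at: "diagonal es nk (nk k) = es k (nk k)"
  by (simp add: diagonal_def inv_f_f strict_mono_imp_inj_on[OF nk])

lemma diagonal_in_Eset:
  assumes "\<And>k. es k \<in> Eset"
  shows "diagonal es nk \<in> Eset"
  unfolding Eset_def
proof (intro CollectI conjI ballI)
  show "infinite (dom (diagonal es nk))"
    using nk by (simp add: dom_diagonal range_inj_infinite strict_mono_imp_inj_on)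
next
  fix n assume "n \<in> dom (diagonal es nk)"
  then obtain k where "n = nk k"
    by (auto simp: dom_diagonal)
  then show "the (diagonal es nk n) \<noteq> {}" and "the (diagonal es nk n) \<subseteq> Cn n"
    using EsetD(2,3)[OF assms nk_dom[of k]] by (simp_all add: diagonal_at)
qed

text \<open>The diagonal can leave \<open>es i\<close> only at the finitely many coordinates \<open>nk k\<close>
  with \<open>k < i\<close>.\<close>
lemma sqsub_star_diagonal:
  assumes dec: "\<And>i. sqsub (es (Suc i)) (es i)"
  shows "sqsub_star (diagonal es nk) (es i)"
proof -
  have late: "nk k \<in> dom (es i) \<and> the (diagonal es nk (nk k)) \<subseteq> the (es i (nk k))" if "i \<le> k" for k
    using sqsub_decreasing_chain[of es, OF dec that] nk_dom[of k] by (auto simp: sqsub_def diagonal_at)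
  have early: "{n \<in> dom (diagonal es nk). P n} \<subseteq> nk ` {..<i}"
    if "\<And>k. i \<le> k \<Longrightarrow> \<not> P (nk k)" for P
  proof
    fix n assume n: "n \<in> {n \<in> dom (diagonal es nk). P n}"
    then obtain k where "n = nk k"
      by (auto simp: dom_diagonal)
    with n that have "\<not> i \<le> k"
      by blast
    then have "k < i"
      by simp
    with \<open>n = nk k\<close> show "n \<in> nk ` {..<i}"
      by blast
  qed
  have "finite (dom (diagonal es nk) - dom (es i))"
    using finite_subset[OF early[of "\<lambda>n. n \<notin> dom (es i)"]] late by (simp add: set_diff_eq)
  moreover have "finite {n \<in> dom (diagonal es nk) \<inter> dom (es i). \<not> the (diagonal es nk n) \<subseteq> the (es i n)}"
    using finite_subset[OF early[of "\<lambda>n. n \<in> dom (es i) \<and> \<not> the (diagonal es nk n) \<subseteq> the (es i n)"]] late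
    by (simp add: Int_def conj_assoc)
  ultimately show ?thesis
    unfolding sqsub_star_def by blast
qed

lemma sqsub_diagonal:
  assumes dec: "\<And>i. sqsub (es (Suc i)) (es i)"
  shows "sqsub (diagonal es nk) (es 0)"
  using sqsub_decreasing_chain[of es, OF dec, of 0] nk_dom
  by (fastforce simp: sqsub_def dom_diagonal diagonal_at)

end

lemma enat_two_power_mult: "(2::enat) ^ j * enat k = enat (2 ^ j * k)"
  by (induction j) (simp_all add: mult.assoc numeral_eq_enat)

text \<open>Choosing \<open>nk k\<close> with \<open>mu_n \<mu> (nk k) (the (h (nk k))) > 2 ^ Suc k * k\<close> leaves size
  above \<open>k\<close> after the \<open>k + 1\<close> halvings that produce \<open>es (Suc k)\<close>.\<close>
lemma fusion_diagonal_in_Hset: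
  assumes h: "h \<in> Hset \<mu>" and es: "\<And>i. es i \<in> Eset" "\<And>i. sqsub (es i) h"
    and es_size: "\<And>i n. n \<in> dom (es i) \<Longrightarrow> mu_n \<mu> n (the (h n)) \<le> 2 ^ i * mu_n \<mu> n (the (es i n))"
  obtains nk where "strict_mono nk" and "\<And>k. nk k \<in> dom (es (Suc k))"
    and "diagonal (\<lambda>k. es (Suc k)) nk \<in> Hset \<mu>"
proof -
  have h_fin: "\<And>K. finite {n \<in> dom h. mu_n \<mu> n (the (h n)) \<le> enat K}"
    using h by (simp add: Hset_def)
  define A where "A k = {n \<in> dom (es (Suc k)). enat (2 ^ Suc k * k) < mu_n \<mu> n (the (h n))}" for k
  have "infinite (A k)" for k
  proof -
    have "dom (es (Suc k)) - A k \<subseteq> {n \<in> dom h. mu_n \<mu> n (the (h n)) \<le> enat (2 ^ Suc k * k)}"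
      using es(2) by (auto simp: A_def sqsub_def not_less)
    then show ?thesis
      using EsetD(1)[OF es(1)] h_fin by (meson Diff_infinite_finite finite_subset)
  qed
  then obtain nk where nk: "strict_mono nk" and nkA: "\<And>k. nk k \<in> A k"
    using strict_mono_choice by blast
  have nk_dom: "nk k \<in> dom (es (Suc k))" for k
    using nkA by (simp add: A_def)
  define h' where "h' = diagonal (\<lambda>k. es (Suc k)) nk"
  have big: "enat k < mu_n \<mu> n (the (h' n))" if "n = nk k" for n k
  proof (rule ccontr)
    assume small: "\<not> ?thesis"
    have "mu_n \<mu> n (the (h n)) \<le> 2 ^ Suc k * mu_n \<mu> n (the (h' n))"
      using es_size[OF nk_dom[of k]] that by (simp only: h'_def diagonal_at[OF nk nk_dom])
    also have "\<dots> \<le> 2 ^ Suc k * enat k"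
      using small by (intro mult_left_mono) simp_all
    also have "\<dots> = enat (2 ^ Suc k * k)"
      by (rule enat_two_power_mult)
    finally have "mu_n \<mu> n (the (h n)) \<le> enat (2 ^ Suc k * k)" .
    with nkA[of k] that show False
      unfolding A_def by (blast dest: leD)
  qed
  have "{n \<in> dom h'. mu_n \<mu> n (the (h' n)) \<le> enat K} \<subseteq> nk ` {..<K}" for K
  proof
    fix n assume n: "n \<in> {n \<in> dom h'. mu_n \<mu> n (the (h' n)) \<le> enat K}"
    then obtain k where "n = nk k"
      by (auto simp: h'_def dom_diagonal[OF nk nk_dom])
    with n big have "enat k < enat K"
      using order_less_le_trans by blast
    with \<open>n = nk k\<close> show "n \<in> nk ` {..<K}"
      by simp
  qed
  then have "finite {n \<in> dom h'. mu_n \<mu> n (the (h' n)) \<le> enat K}" for K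
    by (meson finite_imageI finite_lessThan finite_subset)
  then have "h' \<in> Hset \<mu>"
    using diagonal_in_Eset[OF nk nk_dom es(1)] by (simp add: Hset_def h'_def)
  with nk nk_dom show thesis
    using that by (simp add: h'_def)
qed

lemma shrinkable_Hset:
  assumes subadd: "\<And>A B. \<mu> (A \<union> B) \<le> \<mu> A + \<mu> B"
  shows "shrinkable (Hset \<mu>)"
  unfolding shrinkable_def
proof (intro ballI allI impI)
  fix h and \<O> :: "efun set"
  assume h: "h \<in> Hset \<mu>" and \<O>: "\<O> \<subseteq> Oset \<and> countable \<O> \<and> infinite \<O>"
  have hE: "h \<in> Eset"
    using h by (simp add: Hset_def)
  define os where "os = from_nat_into \<O>"
  have range_os: "range os = \<O>"
    using \<O> by (simp add: os_def infinite_imp_nonempty)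
  obtain es where es: "\<And>i. es i \<in> Eset" "\<And>i. sqsub (es i) h"
    "\<And>i. sqsub (es (Suc i)) (es i)"
    "\<And>i. sqsub (es (Suc i)) (os i) \<or> perp (es (Suc i)) (os i)"
    and es_size: "\<And>i n. n \<in> dom (es i) \<Longrightarrow> mu_n \<mu> n (the (h n)) \<le> 2 ^ i * mu_n \<mu> n (the (es i n))"
    using fusion_sequence[OF subadd hE, of os] by blast
  obtain nk where nk: "strict_mono nk" and nk_dom: "\<And>k. nk k \<in> dom (es (Suc k))"
    and h'H: "diagonal (\<lambda>k. es (Suc k)) nk \<in> Hset \<mu>"
    using fusion_diagonal_in_Hset[OF h es(1,2) es_size] by blast
  define h' where "h' = diagonal (\<lambda>k. es (Suc k)) nk"
  have "sqsub h' h"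
    using sqsub_trans[OF sqsub_diagonal[OF nk nk_dom es(3)] es(2)] by (simp add: h'_def)
  moreover have "sqsub_star h' u \<or> perp h' u" if u: "u \<in> \<O>" for u
  proof -
    obtain i where i: "u = os i"
      using u range_os by blast
    have star: "sqsub_star h' (es (Suc i))"
      using sqsub_star_diagonal[OF nk nk_dom es(3)] by (simp add: h'_def)
    from es(4)[of i] show ?thesis
      unfolding i using sqsub_star_trans[OF star sqsub_imp_sqsub_star] sqsub_star_perp[OF star]
      by blast
  qed
  ultimately show "\<exists>h'\<in>Hset \<mu>. sqsub h' h \<and> (\<forall>u\<in>\<O>. sqsub_star h' u \<or> perp h' u)"
    using h'H unfolding h'_def by blast
qed

section \<open>Largeness\<close>

lemma clopen_superset_keeping_measure:
  assumes ii: "\<And>a b. \<mu> a \<le> enat M \<Longrightarrow> enat M < \<mu> b \<Longrightarrow>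
       (SUP U\<in>{U. a \<subseteq> U \<and> clopen_in cantor_top U}. \<mu> (b - U) + enat M) \<ge> \<mu> b"
    and a: "\<mu> a \<le> enat M" and t: "t \<le> \<mu> b" "t \<noteq> \<infinity>"
  obtains U where "clopen_in cantor_top U" and "a \<subseteq> U" and "t \<le> \<mu> (b - U) + enat M"
proof (cases "\<mu> b \<le> enat M")
  case True
  have "t \<le> enat M"
    using t(1) True by (rule order_trans)
  also have "\<dots> \<le> \<mu> (b - UNIV) + enat M"
    by (simp add: add_increasing)
  finally show thesis
    using that clopen_in_cantor_UNIV by blast
next
  case False
  obtain s where s: "t = enat s"
    using t(2) by auto
  show thesis
  proof (cases s)
    case 0
    then show thesis
      using that[OF clopen_in_cantor_UNIV] s by (simp add: zero_enat_def[symmetric])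
  next
    case (Suc r)
    have "enat r < \<mu> b"
      using t(1) s Suc by (simp add: Suc_ile_eq)
    also have "\<mu> b \<le> (SUP U\<in>{U. a \<subseteq> U \<and> clopen_in cantor_top U}. \<mu> (b - U) + enat M)"
      using ii[OF a] False by simp
    finally obtain U where "a \<subseteq> U" "clopen_in cantor_top U" "enat r < \<mu> (b - U) + enat M"
      by (auto simp: less_SUP_iff)
    moreover have "t \<le> \<mu> (b - U) + enat M"
      using \<open>enat r < \<mu> (b - U) + enat M\<close> s Suc by (simp add: Suc_ile_eq)
    ultimately show thesis
      using that by blast
  qed
qed

lemma clopen_superset_keeping_measures:
  assumes mono: "\<And>A B. A \<subseteq> B \<Longrightarrow> \<mu> A \<le> \<mu> B"
    and ii: "\<And>a b. \<mu> a \<le> enat M \<Longrightarrow> enat M < \<mu> b \<Longrightarrow>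
       (SUP U\<in>{U. a \<subseteq> U \<and> clopen_in cantor_top U}. \<mu> (b - U) + enat M) \<ge> \<mu> b"
    and a: "\<mu> a \<le> enat M" and J: "finite J"
    and t: "\<And>j. j \<in> J \<Longrightarrow> t j \<le> \<mu> (b j) \<and> t j \<noteq> \<infinity>"
  obtains W where "clopen_in cantor_top W" and "a \<subseteq> W"
    and "\<And>j. j \<in> J \<Longrightarrow> t j \<le> \<mu> (b j - W) + enat M"
proof -
  have "\<forall>j\<in>J. \<exists>U. clopen_in cantor_top U \<and> a \<subseteq> U \<and> t j \<le> \<mu> (b j - U) + enat M"
    using clopen_superset_keeping_measure[OF ii a] t by metis
  then obtain V where V: "\<And>j. j \<in> J \<Longrightarrow>
      clopen_in cantor_top (V j) \<and> a \<subseteq> V j \<and> t j \<le> \<mu> (b j - V j) + enat M"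
    by metis
  define W where "W = (\<Inter>j\<in>J. V j)"
  have "t j \<le> \<mu> (b j - W) + enat M" if "j \<in> J" for j
  proof -
    have "t j \<le> \<mu> (b j - V j) + enat M"
      using V[OF that] by blast
    also have "\<dots> \<le> \<mu> (b j - W) + enat M"
      using that by (intro add_right_mono mono) (auto simp: W_def)
    finally show ?thesis .
  qed
  moreover have "clopen_in cantor_top W"
    unfolding W_def using J V by (simp add: clopen_in_cantor_INT)
  moreover have "a \<subseteq> W"
    using V by (auto simp: W_def)
  ultimately show thesis
    using that by blast
qed

lemma dom_dotminus:
  "n \<in> dom (dotminus h u) \<longleftrightarrow> n \<in> dom h \<and> (n \<notin> dom u \<or> \<not> the (h n) \<subseteq> the (u n))"
  by (simp add: dotminus_def dom_def)

lemma the_dotminus: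
  "n \<in> dom (dotminus h u) \<Longrightarrow>
    the (dotminus h u n) = (if n \<in> dom u then the (h n) - the (u n) else the (h n))"
  unfolding dom_dotminus by (simp add: dotminus_def)

lemma dotminus_in_Hset:
  assumes h: "h \<in> Hset \<mu>" and empty: "\<mu> {} \<noteq> \<infinity>"
    and fin: "\<And>K. finite {n \<in> dom h \<inter> dom u. mu_n \<mu> n (the (h n) - the (u n)) \<le> enat K}"
  shows "dotminus h u \<in> Hset \<mu>"
proof -
  have hE: "h \<in> Eset" and h_fin: "\<And>K. finite {n \<in> dom h. mu_n \<mu> n (the (h n)) \<le> enat K}"
    using h by (auto simp: Hset_def)
  let ?d = "dotminus h u"
  obtain K0 where K0: "\<mu> {} = enat K0"
    using empty by auto
  have "n \<in> dom u \<and> mu_n \<mu> n (the (h n) - the (u n)) = enat K0" if "n \<in> dom h - dom ?d" for n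
  proof -
    have "n \<in> dom u" and empty: "the (h n) - the (u n) = {}"
      using that by (auto simp: dom_dotminus)
    then show ?thesis
      unfolding mu_n_slice empty slice_empty K0 by simp
  qed
  then have "dom h - dom ?d \<subseteq> {n \<in> dom h \<inter> dom u. mu_n \<mu> n (the (h n) - the (u n)) \<le> enat K0}"
    by fastforce
  then have "infinite (dom ?d)"
    using EsetD(1)[OF hE] fin by (meson Diff_infinite_finite finite_subset infinite_super)
  moreover have "the (?d n) \<noteq> {}" and "the (?d n) \<subseteq> Cn n" if "n \<in> dom ?d" for n
    using that EsetD(2,3)[OF hE] by (auto simp: the_dotminus dom_dotminus)
  moreover have "{n \<in> dom ?d. mu_n \<mu> n (the (?d n)) \<le> enat K} \<subseteq>
      {n \<in> dom h. mu_n \<mu> n (the (h n)) \<le> enat K} \<union>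
      {n \<in> dom h \<inter> dom u. mu_n \<mu> n (the (h n) - the (u n)) \<le> enat K}" for K
  proof
    fix n assume n: "n \<in> {n \<in> dom ?d. mu_n \<mu> n (the (?d n)) \<le> enat K}"
    then have "n \<in> dom h"
      by (simp add: dom_dotminus)
    with n show "n \<in> {n \<in> dom h. mu_n \<mu> n (the (h n)) \<le> enat K} \<union>
        {n \<in> dom h \<inter> dom u. mu_n \<mu> n (the (h n) - the (u n)) \<le> enat K}"
      using the_dotminus[of n h u] by (cases "n \<in> dom u") simp_all
  qed
  then have "finite {n \<in> dom ?d. mu_n \<mu> n (the (?d n)) \<le> enat K}" for K
    using h_fin fin by (meson finite_UnI finite_subset)
  ultimately show ?thesis
    by (simp add: Hset_def Eset_def)
qed

lemma dotminus_in_Hset_bounded_loss: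
  assumes h: "h \<in> Hset \<mu>" and empty: "\<mu> {} \<noteq> \<infinity>"
    and loss: "\<And>n. n \<in> dom h \<Longrightarrow> n \<in> dom u \<Longrightarrow> j \<le> n \<Longrightarrow>
      min (mu_n \<mu> n (the (h n))) (enat n) \<le> mu_n \<mu> n (the (h n) - the (u n)) + enat M"
  shows "dotminus h u \<in> Hset \<mu>"
proof (rule dotminus_in_Hset[OF h empty])
  fix K
  have "{n \<in> dom h \<inter> dom u. mu_n \<mu> n (the (h n) - the (u n)) \<le> enat K} \<subseteq>
      {n \<in> dom h. mu_n \<mu> n (the (h n)) \<le> enat (K + M)} \<union> {..K + M} \<union> {..<j}"
  proof
    fix n assume n: "n \<in> {n \<in> dom h \<inter> dom u. mu_n \<mu> n (the (h n) - the (u n)) \<le> enat K}"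
    show "n \<in> {n \<in> dom h. mu_n \<mu> n (the (h n)) \<le> enat (K + M)} \<union> {..K + M} \<union> {..<j}"
    proof (cases "j \<le> n")
      case True
      have "min (mu_n \<mu> n (the (h n))) (enat n) \<le> mu_n \<mu> n (the (h n) - the (u n)) + enat M"
        using loss True n by blast
      also have "\<dots> \<le> enat K + enat M"
        using n by (intro add_right_mono) simp
      finally have "mu_n \<mu> n (the (h n)) \<le> enat (K + M) \<or> n \<le> K + M"
        by (simp add: min_le_iff_disj)
      then show ?thesis
        using n by auto
    qed simp
  qed
  moreover have "finite {n \<in> dom h. mu_n \<mu> n (the (h n)) \<le> enat (K + M)}"
    using h by (simp add: Hset_def)
  ultimately show "finite {n \<in> dom h \<inter> dom u. mu_n \<mu> n (the (h n) - the (u n)) \<le> enat K}"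
    by (meson finite_UnI finite_atMost finite_lessThan finite_subset)
qed

text \<open>Restricting to \<open>j \<le> n\<close> and truncating at \<open>n\<close> leaves finitely many finite targets on
  each coordinate, so that one clopen set can meet them all.\<close>
lemma clopen_cover_bounded_loss:
  assumes mono: "\<And>A B. A \<subseteq> B \<Longrightarrow> \<mu> A \<le> \<mu> B"
    and ii: "\<And>a b. \<mu> a \<le> enat M \<Longrightarrow> enat M < \<mu> b \<Longrightarrow>
       (SUP U\<in>{U. a \<subseteq> U \<and> clopen_in cantor_top U}. \<mu> (b - U) + enat M) \<ge> \<mu> b"
    and g: "g \<in> Gset \<mu> M"
  obtains u where "u \<in> Oset" and "sqsub g u" and "dom u = dom g"
    and "\<And>n j. n \<in> dom g \<Longrightarrow> j \<le> n \<Longrightarrow>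
      min (mu_n \<mu> n (B j n)) (enat n) \<le> mu_n \<mu> n (B j n - the (u n)) + enat M"
proof -
  have gE: "g \<in> Eset" and g_small: "\<And>n. n \<in> dom g \<Longrightarrow> \<mu> (slice n (the (g n))) \<le> enat M"
    using g by (auto simp: Gset_def mu_n_slice)
  have "\<exists>W. clopen_in cantor_top W \<and> slice n (the (g n)) \<subseteq> W \<and>
      (\<forall>j\<le>n. min (\<mu> (slice n (B j n))) (enat n) \<le> \<mu> (slice n (B j n) - W) + enat M)"
    if n: "n \<in> dom g" for n
  proof -
    obtain W where "clopen_in cantor_top W" "slice n (the (g n)) \<subseteq> W"
      "\<And>j. j \<in> {..n} \<Longrightarrow> min (\<mu> (slice n (B j n))) (enat n) \<le> \<mu> (slice n (B j n) - W) + enat M"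
      by (rule clopen_superset_keeping_measures[OF mono ii g_small[OF n], where J = "{..n}"
            and t = "\<lambda>j. min (\<mu> (slice n (B j n))) (enat n)" and b = "\<lambda>j. slice n (B j n)"])
        (auto simp: min_def dest: enat_ile)
    then show ?thesis
      by auto
  qed
  then obtain W where W: "\<And>n. n \<in> dom g \<Longrightarrow> clopen_in cantor_top (W n) \<and> slice n (the (g n)) \<subseteq> W n \<and>
      (\<forall>j\<le>n. min (\<mu> (slice n (B j n))) (enat n) \<le> \<mu> (slice n (B j n) - W n) + enat M)"
    by metis
  define u where "u = efun_on (dom g) (\<lambda>n. {n} \<times> W n)"
  show thesis
  proof (rule that)
    have "slice n (the (g n)) \<noteq> {}" if "n \<in> dom g" for n
      using EsetD(2,3)[OF gE that] by (simp add: slice_eq_empty_iff)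
    then have "W n \<noteq> {}" if "n \<in> dom g" for n
      using W[OF that] that by blast
    moreover have "{n} \<times> W n \<subseteq> Cn n" for n
      by (auto simp: Cn_def)
    moreover have "clopen_in (subtopology C_top (Cn n)) ({n} \<times> W n)" if "n \<in> dom g" for n
      using W[OF that] clopen_in_Cn_Times by blast
    ultimately show "u \<in> Oset"
      using EsetD(1)[OF gE] by (simp add: Oset_def Eset_def u_def)
    show "sqsub g u"
      unfolding sqsub_def u_def
    proof (intro conjI ballI)
      fix n assume n: "n \<in> dom g"
      show "the (g n) \<subseteq> the (efun_on (dom g) (\<lambda>n. {n} \<times> W n) n)"
        using W[OF n] n by (simp add: subset_Cn_iff_slice[OF EsetD(3)[OF gE n]])
    qed simp
    show "dom u = dom g"
      by (simp add: u_def)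
    show "min (mu_n \<mu> n (B j n)) (enat n) \<le> mu_n \<mu> n (B j n - the (u n)) + enat M"
      if "n \<in> dom g" "j \<le> n" for n j
      using W[OF that(1)] that by (simp add: u_def mu_n_slice)
  qed
qed

lemma large_Gset_Hset:
  assumes mono: "\<And>A B. A \<subseteq> B \<Longrightarrow> \<mu> A \<le> \<mu> B"
    and ii: "\<And>a b. \<mu> a \<le> enat M \<Longrightarrow> enat M < \<mu> b \<Longrightarrow>
       (SUP U\<in>{U. a \<subseteq> U \<and> clopen_in cantor_top U}. \<mu> (b - U) + enat M) \<ge> \<mu> b"
  shows "large (Gset \<mu> M) (Hset \<mu>)"
  unfolding large_def
proof (intro ballI allI impI)
  fix g and \<H> :: "efun set"
  assume g: "g \<in> Gset \<mu> M" and \<H>: "\<H> \<subseteq> Hset \<mu> \<and> countable \<H> \<and> infinite \<H>"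
  define hs where "hs = from_nat_into \<H>"
  have range_hs: "range hs = \<H>"
    using \<H> by (simp add: hs_def infinite_imp_nonempty)
  obtain u where u: "u \<in> Oset" "sqsub g u" "dom u = dom g"
    and loss: "\<And>n j. n \<in> dom g \<Longrightarrow> j \<le> n \<Longrightarrow>
      min (mu_n \<mu> n (the (hs j n))) (enat n) \<le> mu_n \<mu> n (the (hs j n) - the (u n)) + enat M"
    using clopen_cover_bounded_loss[OF mono ii g, where B = "\<lambda>j n. the (hs j n)"] by blast
  have "\<mu> {} \<le> enat M"
  proof -
    have "infinite (dom g)"
      using g by (simp add: Gset_def Eset_def)
    then obtain n where n: "n \<in> dom g"
      by (metis finite.emptyI ex_in_conv)
    have "\<mu> {} \<le> \<mu> (slice n (the (g n)))"
      by (rule mono) simp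
    also have "\<dots> \<le> enat M"
      using g n by (simp add: Gset_def mu_n_slice)
    finally show ?thesis .
  qed
  then have "\<mu> {} \<noteq> \<infinity>"
    by (metis enat_ile enat.distinct(2))
  moreover have "hs j \<in> Hset \<mu>" for j
    using \<H> range_hs by blast
  ultimately have "dotminus (hs j) u \<in> Hset \<mu>" for j
    using loss by (intro dotminus_in_Hset_bounded_loss) (auto simp: u(3))
  then show "\<exists>u\<in>Oset. sqsub g u \<and> (\<forall>h\<in>\<H>. dotminus h u \<in> Hset \<mu>)"
    using u range_hs by blast
qed

theorem theorem2p5:
  fixes M :: nat and \<mu> :: "cantor set \<Rightarrow> enat"
  assumes mono: "\<And>A B. A \<subseteq> B \<Longrightarrow> \<mu> A \<le> \<mu> B"
    and subadd: "\<And>A B. \<mu> (A \<union> B) \<le> \<mu> A + \<mu> B"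
    and i: "\<And>U. U \<noteq> {} \<Longrightarrow> clopen_in cantor_top U \<Longrightarrow> \<mu> U = \<infinity>"
    and ii: "\<And>a b. \<mu> a \<le> enat M \<Longrightarrow> enat M < \<mu> b \<Longrightarrow>
       (SUP U\<in>{U. a \<subseteq> U \<and> clopen_in cantor_top U}. \<mu> (b - U) + enat M) \<ge> \<mu> b"
  shows "dense_fam (Hset \<mu>) \<and> shrinkable (Hset \<mu>) \<and> large (Gset \<mu> M) (Hset \<mu>)"
  using dense_fam_Hset[of \<mu>, OF i] shrinkable_Hset[of \<mu>, OF subadd]
    large_Gset_Hset[of \<mu> M, OF mono ii] by blast

end
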